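(* For any $n\in\mathbb{N}$ the standing up map $T^n:\mathcal{B}_n\to\Omega$ is a bijection.
   Context: Let $\mathcal{B}$ be the set of $\sigma\in\{-1,+1\}^{\mathbb{Z}}$ for which there exist $a,b\in\mathbb{Z}$ with $\sigma_{a-i}=-1$ and $\sigma_{b+i}=+1$ for all $i\in\mathbb{N}$. For $\sigma\in\mathcal{B}$ let $N(\sigma)=\#\{i\geq1:\sigma_i=-1\}-\#\{i\leq 0:\sigma_i=+1\}$, and $\mathcal{B}_n=\{\sigma\in\mathcal{B}:N(\sigma)=n\}$. Let $\Omega=\{\omega\in\mathbb{Z}_{\geq 0}^{\mathbb{Z}_{<0}} : \exists N>0 \text{ such that } \omega_{-i}=0\ \forall i\geq N\}$. For $\sigma\in\mathcal{B}_n$ let $S_r(\sigma)$ be the site of the $r$-th positive spin of $\sigma$ counted from the left. The standing up map is $T^n(\sigma)=\omega$ with $\omega_{-r}=S_{r+1}(\sigma)-S_r(\sigma)-1$ for $r\in\mathbb{Z}_{>0}$, i.e. $\omega_{-r}$ is the number of negative spins between the $r$-th and $(r+1)$-th positive spins. *)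

theory Defs
  imports Main
begin

definition Bconf :: "(int \<Rightarrow> int) set" where
  "Bconf = {\<sigma>. (\<forall>i. \<sigma> i = -1 \<or> \<sigma> i = 1) \<and>
      (\<exists>a b::int. \<forall>i::nat. \<sigma> (a - int i) = -1 \<and> \<sigma> (b + int i) = 1)}"

definition Ncharge :: "(int \<Rightarrow> int) \<Rightarrow> int" where
  "Ncharge \<sigma> = int (card {i::int. i \<ge> 1 \<and> \<sigma> i = -1}) - int (card {i::int. i \<le> 0 \<and> \<sigma> i = 1})"

definition Bn :: "int \<Rightarrow> (int \<Rightarrow> int) set" where
  "Bn n = {\<sigma> \<in> Bconf. Ncharge \<sigma> = n}"

text \<open>Omega: nonnegative integer sequences indexed by the negative integers, eventually zero
  (as index goes to minus infinity). Represented as int => nat with the convention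
  that the (meaningless) values at indices >= 0 are 0.\<close>
definition Omega :: "(int \<Rightarrow> nat) set" where
  "Omega = {\<omega>. (\<forall>i\<ge>0. \<omega> i = 0) \<and> (\<exists>N>0. \<forall>i\<ge>N. \<omega> (- i) = 0)}"

definition Spos :: "(int \<Rightarrow> int) \<Rightarrow> nat \<Rightarrow> int" where
  "Spos \<sigma> r = (THE s. \<sigma> s = 1 \<and> card {j. j < s \<and> \<sigma> j = 1} = r - 1)"

text \<open>Standing up map T^n (its formula does not depend on n; n only fixes the domain Bn n).\<close>
definition standup :: "(int \<Rightarrow> int) \<Rightarrow> (int \<Rightarrow> nat)" where
  "standup \<sigma> = (\<lambda>i. if i < 0 then nat (Spos \<sigma> (nat (- i) + 1) - Spos \<sigma> (nat (- i)) - 1) else 0)"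

end

theory Submission
  imports Defs "HOL-Library.Infinite_Set"
begin

(* A configuration in B is the same thing as the increasing enumeration S_1 < S_2 < ... of its
   positive sites, which eventually advances in steps of 1. The standing up map records exactly the
   gaps S_(r+1) - S_r - 1; these determine S up to a translation, and the translation is fixed by the
   charge, which equals S_K - K for every K beyond the last gap. Conversely, any finitely supported
   gap sequence and any prescribed charge determine such an enumeration. *)

(* Positive sites are enumerated from index 0 here: S r is the paper's S_(r+1). *)
definition spins :: "(nat \<Rightarrow> int) \<Rightarrow> int \<Rightarrow> int" where
  "spins S s = (if s \<in> range S then 1 else -1)"

lemma strict_mono_int_eventually_ge:
  fixes S :: "nat \<Rightarrow> int"
  assumes "strict_mono S"
  obtains K where "\<And>k. k \<ge> K \<Longrightarrow> S k \<ge> b"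
proof
  have lower: "S 0 + int k \<le> S k" for k
  proof (induction k)
    case (Suc k)
    have "S k < S (Suc k)" using assms by (simp add: strict_mono_less)
    with Suc show ?case by simp
  qed simp
  show "S k \<ge> b" if "k \<ge> nat (b - S 0)" for k
    using lower[of k] that unfolding nat_le_iff by linarith
qed

lemma consecutive_tail_add:
  fixes S :: "nat \<Rightarrow> int"
  assumes "\<forall>k\<ge>K. S (Suc k) = S k + 1"
  shows "S (K + m) = S K + int m"
  using assms by (induction m) auto

lemma consecutive_tail_in_range:
  fixes S :: "nat \<Rightarrow> int"
  assumes "\<forall>k\<ge>K. S (Suc k) = S k + 1" "s \<ge> S K"
  shows "s \<in> range S"
proof -
  have "s = S (K + nat (s - S K))" using consecutive_tail_add[OF assms(1)] assms(2) by simp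
  then show ?thesis by blast
qed

lemma Bconf_iff_spins:
  "\<sigma> \<in> Bconf \<longleftrightarrow>
     (\<exists>S. strict_mono S \<and> (\<exists>K. \<forall>k\<ge>K. S (Suc k) = S k + 1) \<and> \<sigma> = spins S)"
proof
  assume "\<sigma> \<in> Bconf"
  then obtain a b where pm: "\<forall>i. \<sigma> i = -1 \<or> \<sigma> i = 1"
    and ab: "\<forall>i::nat. \<sigma> (a - int i) = -1 \<and> \<sigma> (b + int i) = 1"
    unfolding Bconf_def by blast
  have below: "a < s" if "\<sigma> s = 1" for s
    using ab[rule_format, of "nat (a - s)"] that by (cases "s \<le> a") auto
  have above: "\<sigma> s = 1" if "s \<ge> b" for s
    using ab[rule_format, of "nat (s - b)"] that by simp
  \<comment> \<open>the positive sites lie above a, so they are enumerated via their offsets from a\<close>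
  define Q where "Q = {k::nat. \<sigma> (a + int k) = 1}"
  have "{nat (b - a)..} \<subseteq> Q" unfolding Q_def using above by auto
  then have Q: "infinite Q" using infinite_Ici infinite_super by blast
  define S where "S k = a + int (enumerate Q k)" for k
  have mono: "strict_mono S"
    using strict_mono_enumerate[OF Q] by (simp add: S_def strict_mono_def)
  have range: "range S = {s. \<sigma> s = 1}"
  proof -
    have "{s. \<sigma> s = 1} = (\<lambda>k. a + int k) ` Q"
    proof (intro equalityI subsetI)
      fix s assume "s \<in> {s. \<sigma> s = 1}"
      then have "s = a + int (nat (s - a))" "nat (s - a) \<in> Q"
        using below[of s] by (auto simp: Q_def)
      then show "s \<in> (\<lambda>k. a + int k) ` Q" by blast
    qed (auto simp: Q_def)
    moreover have "range S = (\<lambda>k. a + int k) ` range (enumerate Q)"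
      unfolding S_def by (simp add: image_image)
    ultimately show ?thesis using range_enumerate[OF Q] by simp
  qed
  obtain K where K: "\<And>k. k \<ge> K \<Longrightarrow> S k \<ge> b"
    using strict_mono_int_eventually_ge[OF mono] by blast
  have "S (Suc k) = S k + 1" if "k \<ge> K" for k
  proof -
    have "S k + 1 \<in> range S" using K[OF that] range above by simp
    then obtain j where j: "S j = S k + 1" by auto
    then have "k < j" using strict_mono_less[OF mono, of k j] by simp
    then have "S (Suc k) \<le> S k + 1" using mono by (simp add: strict_mono_less_eq flip: j)
    moreover have "S k < S (Suc k)" using mono by (simp add: strict_mono_less)
    ultimately show ?thesis by simp
  qed
  moreover have "\<sigma> = spins S"
  proof
    show "\<sigma> s = spins S s" for s using pm[rule_format, of s] by (auto simp: spins_def range)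
  qed
  ultimately show "\<exists>S. strict_mono S \<and> (\<exists>K. \<forall>k\<ge>K. S (Suc k) = S k + 1) \<and> \<sigma> = spins S"
    using mono by blast
next
  assume "\<exists>S. strict_mono S \<and> (\<exists>K. \<forall>k\<ge>K. S (Suc k) = S k + 1) \<and> \<sigma> = spins S"
  then obtain S K where mono: "strict_mono S" and tail: "\<forall>k\<ge>K. S (Suc k) = S k + 1"
    and \<sigma>: "\<sigma> = spins S" by blast
  have "S 0 \<le> S k" for k by (simp add: strict_mono_less_eq[OF mono])
  then have "s \<notin> range S" if "s < S 0" for s
    using that by (auto simp: not_le[symmetric])
  then have ends: "\<forall>i::nat. \<sigma> (S 0 - 1 - int i) = -1 \<and> \<sigma> (S K + int i) = 1"
    using consecutive_tail_in_range[OF tail] by (simp add: \<sigma> spins_def)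
  show "\<sigma> \<in> Bconf"
    unfolding Bconf_def
  proof (intro CollectI conjI)
    show "\<forall>i. \<sigma> i = -1 \<or> \<sigma> i = 1" by (simp add: \<sigma> spins_def)
    show "\<exists>a b. \<forall>i::nat. \<sigma> (a - int i) = -1 \<and> \<sigma> (b + int i) = 1" using ends by blast
  qed
qed

lemma Spos_spins:
  assumes "strict_mono S"
  shows "Spos (spins S) (Suc r) = S r"
  unfolding Spos_def
proof (rule the_equality)
  have count: "card {j. j < S k \<and> spins S j = 1} = k" for k
  proof -
    have "{j. j < S k \<and> spins S j = 1} = S ` {..<k}"
    proof (intro equalityI subsetI)
      fix j assume "j \<in> {j. j < S k \<and> spins S j = 1}"
      then obtain i where "j = S i" "S i < S k" by (auto simp: spins_def split: if_splits)
      then show "j \<in> S ` {..<k}" using assms by (simp add: strict_mono_less)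
    qed (use assms in \<open>auto simp: spins_def strict_mono_less strict_mono_eq\<close>)
    then show ?thesis
      using strict_mono_imp_inj_on[OF assms] by (simp add: card_image inj_on_subset)
  qed
  then show "spins S (S r) = 1 \<and> card {j. j < S r \<and> spins S j = 1} = Suc r - 1"
    by (simp add: spins_def)
  fix s assume "spins S s = 1 \<and> card {j. j < s \<and> spins S j = 1} = Suc r - 1"
  then obtain k where "s = S k" "card {j. j < S k \<and> spins S j = 1} = r"
    by (auto simp: spins_def split: if_splits)
  then show "s = S r" using count by simp
qed

lemma standup_spins:
  assumes "strict_mono S"
  shows "standup (spins S) (- int (Suc k)) = nat (S (Suc k) - S k - 1)"
  using Spos_spins[OF assms] by (simp add: standup_def del: of_nat_Suc)

lemma Ncharge_spins:
  assumes mono: "strict_mono S" and tail: "\<forall>k\<ge>K. S (Suc k) = S k + 1"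
  shows "Ncharge (spins S) = S K - int K - 1"
proof -
  have Ncharge_at: "Ncharge (spins S) = S L - int L - 1" if "L \<ge> K" "S L \<ge> 1" for L
  proof -
    define P where "P = S ` {..<L}"
    define I where "I = {1..<S L}"
    have tail_L: "\<forall>k\<ge>L. S (Suc k) = S k + 1" using tail \<open>L \<ge> K\<close> by simp
    have P: "range S \<inter> {..<S L} = P"
      using mono by (auto simp: P_def strict_mono_less)
    have neg: "{i. i \<ge> 1 \<and> spins S i = -1} = I - P"
      using P consecutive_tail_in_range[OF tail_L] by (force simp: I_def spins_def not_le)
    have pos: "{i. i \<le> 0 \<and> spins S i = 1} = P - I"
      using P \<open>S L \<ge> 1\<close> by (force simp: I_def spins_def)
    have fin: "finite I" "finite P" by (simp_all add: I_def P_def)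
    have "card P = L"
      unfolding P_def using strict_mono_imp_inj_on[OF mono] by (simp add: card_image inj_on_subset)
    moreover have "card I = nat (S L - 1)" by (simp add: I_def)
    moreover have "card (I \<inter> P) \<le> card I" "card (I \<inter> P) \<le> card P"
      using fin by (simp_all add: card_mono)
    moreover have "card (I - P) = card I - card (I \<inter> P)" "card (P - I) = card P - card (I \<inter> P)"
      using fin by (simp_all add: card_Diff_subset_Int Int_commute)
    ultimately show ?thesis
      unfolding Ncharge_def neg pos using \<open>S L \<ge> 1\<close> by simp
  qed
  \<comment> \<open>going further into the tail changes neither the tail property nor S L - L\<close>
  define L where "L = K + nat (1 - S K)"
  have "S L = S K + int (nat (1 - S K))"
    unfolding L_def by (rule consecutive_tail_add[OF tail])
  then show ?thesis
    using Ncharge_at[of L] by (simp add: L_def)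
qed

lemma standup_in_Omega:
  assumes "\<sigma> \<in> Bconf"
  shows "standup \<sigma> \<in> Omega"
proof -
  obtain S K where mono: "strict_mono S" and tail: "\<forall>k\<ge>K. S (Suc k) = S k + 1"
    and \<sigma>: "\<sigma> = spins S"
    using assms Bconf_iff_spins by blast
  have "standup \<sigma> (- i) = 0" if i: "i \<ge> int K + 1" for i
  proof -
    obtain k where "nat i = Suc k" by (cases "nat i") (use i in auto)
    then have "i = int (Suc k)" "k \<ge> K" using i by (auto simp: nat_eq_iff)
    then show ?thesis
      using standup_spins[OF mono, of k] tail by (simp add: \<sigma> del: of_nat_Suc)
  qed
  moreover have "standup \<sigma> i = 0" if "i \<ge> 0" for i
    using that by (simp add: standup_def)
  ultimately show ?thesis
    unfolding Omega_def by (intro CollectI conjI allI impI exI[of _ "int K + 1"]) auto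
qed

lemma inj_on_standup_Bn: "inj_on standup (Bn m)"
proof (rule inj_onI)
  fix \<sigma> \<tau> assume "\<sigma> \<in> Bn m" "\<tau> \<in> Bn m" and same: "standup \<sigma> = standup \<tau>"
  then have "\<sigma> \<in> Bconf" "\<tau> \<in> Bconf" and charge: "Ncharge \<sigma> = Ncharge \<tau>"
    by (simp_all add: Bn_def)
  obtain S K where monoS: "strict_mono S" and tailS: "\<forall>k\<ge>K. S (Suc k) = S k + 1"
    and \<sigma>: "\<sigma> = spins S"
    using \<open>\<sigma> \<in> Bconf\<close> Bconf_iff_spins by blast
  obtain T L where monoT: "strict_mono T" and tailT: "\<forall>k\<ge>L. T (Suc k) = T k + 1"
    and \<tau>: "\<tau> = spins T"
    using \<open>\<tau> \<in> Bconf\<close> Bconf_iff_spins by blast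
  have gap: "S (Suc k) - S k = T (Suc k) - T k" for k
  proof -
    have "nat (S (Suc k) - S k - 1) = nat (T (Suc k) - T k - 1)"
      using same standup_spins[OF monoS, of k] standup_spins[OF monoT, of k] by (simp add: \<sigma> \<tau>)
    moreover have "S k < S (Suc k)" "T k < T (Suc k)"
      using monoS monoT by (simp_all add: strict_mono_less)
    ultimately show ?thesis by simp
  qed
  have shift: "S k - T k = S 0 - T 0" for k
  proof (induction k)
    case (Suc k)
    then show ?case using gap[of k] by linarith
  qed simp
  have "S (max K L) = T (max K L)"
    using charge Ncharge_spins[OF monoS, of "max K L"] Ncharge_spins[OF monoT, of "max K L"]
      tailS tailT by (simp add: \<sigma> \<tau>)
  then have "S k = T k" for k using shift[of k] shift[of "max K L"] by linarith
  then have "S = T" ..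
  then show "\<sigma> = \<tau>" by (simp add: \<sigma> \<tau>)
qed

lemma Omega_subset_standup_Bn: "Omega \<subseteq> standup ` Bn m"
proof
  fix \<omega> assume "\<omega> \<in> Omega"
  then obtain N where "N > 0" and \<omega>_tail: "\<forall>i\<ge>N. \<omega> (- i) = 0" and \<omega>_nonneg: "\<forall>i\<ge>0. \<omega> i = 0"
    unfolding Omega_def by blast
  define g where "g k = int (\<omega> (- int (Suc k)))" for k
  define K where "K = nat N"
  define S where "S k = m + 1 - (\<Sum>j<K. g j) + int k + (\<Sum>j<k. g j)" for k
  have step: "S (Suc k) = S k + 1 + g k" for k
    by (simp add: S_def)
  have mono: "strict_mono S"
    by (rule strict_mono_Suc_iff[THEN iffD2]) (simp add: step g_def)
  have "g k = 0" if "k \<ge> K" for k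
  proof -
    have "int (Suc k) \<ge> N" using that by (simp add: K_def nat_le_iff)
    then show ?thesis using \<omega>_tail by (simp only: g_def)
  qed
  then have tail: "\<forall>k\<ge>K. S (Suc k) = S k + 1" by (simp add: step)
  have "spins S \<in> Bconf"
    using Bconf_iff_spins mono tail by blast
  moreover have "S K - int K - 1 = m" by (simp add: S_def)
  then have "Ncharge (spins S) = m" using Ncharge_spins[OF mono tail] by simp
  ultimately have "spins S \<in> Bn m" by (simp add: Bn_def)
  moreover have "standup (spins S) = \<omega>"
  proof
    fix i
    show "standup (spins S) i = \<omega> i"
    proof (cases "i < 0")
      case True
      then obtain k where "nat (- i) = Suc k" by (cases "nat (- i)") auto
      then have "i = - int (Suc k)" using True by (simp add: nat_eq_iff)
      then show ?thesis using standup_spins[OF mono, of k] by (simp add: step g_def del: of_nat_Suc)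
    qed (simp add: standup_def \<omega>_nonneg)
  qed
  ultimately show "\<omega> \<in> standup ` Bn m" by blast
qed

theorem lemma3p2:
  fixes n :: nat
  shows "bij_betw standup (Bn (int n)) Omega"
  unfolding bij_betw_def
proof
  show "inj_on standup (Bn (int n))" by (rule inj_on_standup_Bn)
  have "standup ` Bn (int n) \<subseteq> Omega"
    using standup_in_Omega by (auto simp: Bn_def)
  then show "standup ` Bn (int n) = Omega"
    using Omega_subset_standup_Bn by blast
qed

end
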